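(* In the setting below, if for some numbers $q_1,\dots,q_I$ one has $N_i^k/N^k\to q_i$ as $k\to\infty$ for every $1\le i\le I$, then $\nu_i^n/n\to q_i$ as $n\to\infty$ for every $1\le i\le I$. In particular, if the $N_i^k$ are random and $N_i^k/N^k\to q_i^*$ almost surely for all $i$, then $\nu_i^n/n\to q_i^*$ almost surely for all $i$.
   Context: Let $I\ge1$, let $0=N^0<N^1<N^2<\cdots$ be integers, and let $N_i^k$ ($1\le i\le I$, $k\ge0$) be nonnegative integers with $N_i^0=0$, $N_i^k\ge N_i^{k-1}$ and $\sum_{i=1}^IN_i^k=N^k$ for all $k$. For $k\ge1$ put $r_i^k=\frac{N_i^k-N_i^{k-1}}{N^k-N^{k-1}}$. Define integers $\nu_i^n$ ($n\ge0$) recursively: $\nu_i^0=0$ for all $i$; for $n\ge1$, with $k$ the unique integer such that $N^{k-1}<n\le N^k$, let $i_n$ be an index maximizing $r_i^k-\frac{\nu_i^{n-1}-N_i^{k-1}}{n-N^{k-1}}$ over $1\le i\le I$ (ties broken by choosing the largest $r_i^k$, and if still tied the largest $i$), and set $\nu_{i_n}^n=\nu_{i_n}^{n-1}+1$, $\nu_i^n=\nu_i^{n-1}$ for $i\ne i_n$. *)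

theory Defs
  imports Complex_Main
begin

definition blk :: "(nat \<Rightarrow> nat) \<Rightarrow> nat \<Rightarrow> nat" where
  "blk N n = (THE k. 1 \<le> k \<and> N (k - 1) < n \<and> n \<le> N k)"

definition rr :: "(nat \<Rightarrow> nat) \<Rightarrow> (nat \<Rightarrow> nat \<Rightarrow> nat) \<Rightarrow> nat \<Rightarrow> nat \<Rightarrow> real" where
  "rr N Ni i k = (real (Ni i k) - real (Ni i (k - 1))) / (real (N k) - real (N (k - 1)))"

definition pick :: "(nat \<Rightarrow> real) \<Rightarrow> (nat \<Rightarrow> real) \<Rightarrow> nat \<Rightarrow> nat" where
  "pick S R I = (THE i. i \<in> {1..I} \<and>
     (\<forall>j\<in>{1..I}. S j < S i \<or> (S j = S i \<and> (R j < R i \<or> (R j = R i \<and> j \<le> i)))))"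

primrec nu :: "(nat \<Rightarrow> nat) \<Rightarrow> (nat \<Rightarrow> nat \<Rightarrow> nat) \<Rightarrow> nat \<Rightarrow> nat \<Rightarrow> nat \<Rightarrow> nat" where
  "nu N Ni I 0 = (\<lambda>i. 0)"
| "nu N Ni I (Suc n) =
     (let k = blk N (Suc n);
          prev = nu N Ni I n;
          S = (\<lambda>i. rr N Ni i k - (real (prev i) - real (Ni i (k - 1))) / (real (Suc n) - real (N (k - 1))));
          j = pick S (\<lambda>i. rr N Ni i k) I
      in prev(j := prev j + 1))"

end

theory Submission
  imports Defs "HOL-Library.Product_Lexorder"
begin

(* The greedy allocation nu tracks the piecewise linear interpolation of the
   targets Ni i k: on the k-th block N k < n \<le> N (k+1) every index i should
   ideally have received  interp i k n = Ni i k + r_i^(k+1) (n - N k)  units.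
   The proof has three parts.
   (1) Greedy step: inside a block, the step n \<rightarrow> n+1 increments an index
       with the largest deficit interp i k (n+1) - nu n i.  The deficits sum to 1,
       so the chosen deficit is positive, and an induction over the block shows
       nu n i - interp i k n < 1 for all i, provided the block starts exactly on
       target.  Since the excesses sum to 0, they are also \<ge> -I.
   (2) Block ends: at n = N (k+1) all excesses are < 1, hence nu \<le> Ni pointwise
       (integers), and equal sums force nu (N k) i = Ni i k for all k.
   (3) Convergence: interp i k n / n is a convex combination of the ratios at the
       two block endpoints, so it is within e of q i once both ratios are; the
       error |nu n i - interp i k n| \<le> I vanishes after division by n. *)

text \<open>The tie-breaking selection \<open>pick\<close> returns an index of \<open>{1..I}\<close> maximizing \<open>S\<close>;
  the lexicographic maximum of \<open>(S i, R i, i)\<close> is the unique admissible choice.\<close>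
lemma pick_maximizes:
  assumes "I \<ge> 1"
  shows "pick S R I \<in> {1..I}" and "\<And>j. j \<in> {1..I} \<Longrightarrow> S j \<le> S (pick S R I)"
proof -
  define key where "key = (\<lambda>i::nat. (S i, R i, i))"
  have "finite (key ` {1..I})" "key ` {1..I} \<noteq> {}" using assms by auto
  then obtain i where i: "i \<in> {1..I}" "key i = Max (key ` {1..I})"
    by (metis Max_in imageE)
  have dominates: "S j < S i \<or> (S j = S i \<and> (R j < R i \<or> (R j = R i \<and> j \<le> i)))"
    if "j \<in> {1..I}" for j
  proof -
    have "key j \<le> key i" using i that by simp
    then show ?thesis unfolding key_def by auto
  qed
  have "pick S R I = i"
    unfolding pick_def
  proof (rule the_equality)
    fix i' assume "i' \<in> {1..I} \<and> (\<forall>j\<in>{1..I}. S j < S i' \<or>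
                    (S j = S i' \<and> (R j < R i' \<or> (R j = R i' \<and> j \<le> i'))))"
    then have "S i < S i' \<or> (S i = S i' \<and> (R i < R i' \<or> (R i = R i' \<and> i \<le> i')))"
      using i(1) by blast
    moreover have "S i' < S i \<or> (S i' = S i \<and> (R i' < R i \<or> (R i' = R i \<and> i' \<le> i)))"
      using dominates \<open>i' \<in> {1..I} \<and> _\<close> by blast
    ultimately show "i' = i" by auto
  qed (use i dominates in blast)
  with i dominates show "pick S R I \<in> {1..I}" "\<And>j. j \<in> {1..I} \<Longrightarrow> S j \<le> S (pick S R I)"
    by force+
qed

lemma sum_increment:
  fixes f :: "'a \<Rightarrow> nat"
  assumes "finite A" "j \<in> A"
  shows "(\<Sum>i\<in>A. (f(j := f j + 1)) i) = (\<Sum>i\<in>A. f i) + 1"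
proof -
  have "(\<Sum>i\<in>A. (f(j := f j + 1)) i) = (\<Sum>i\<in>A. f i + (if i = j then 1 else 0))"
    by (rule sum.cong) auto
  with assms show ?thesis by (simp add: sum.distrib)
qed

lemma max_term_pos:
  fixes D :: "'a \<Rightarrow> real"
  assumes "finite A" "\<And>i. i \<in> A \<Longrightarrow> D i \<le> D j" "(\<Sum>i\<in>A. D i) > 0"
  shows "D j > 0"
proof -
  have "(\<Sum>i\<in>A. D i) \<le> real (card A) * D j" using sum_bounded_above[of A D "D j"] assms(2) by simp
  with assms(3) have "0 < real (card A) * D j" by linarith
  then show ?thesis by (simp add: zero_less_mult_iff)
qed

lemma zero_sum_lower_bound:
  fixes E :: "'a \<Rightarrow> real"
  assumes "finite A" "(\<Sum>j\<in>A. E j) = 0" "\<And>j. j \<in> A \<Longrightarrow> E j \<le> 1" "i \<in> A"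
  shows "E i \<ge> - real (card A)"
proof -
  have "(\<Sum>j\<in>A - {i}. E j) \<le> real (card (A - {i}))"
    using sum_bounded_above[of "A - {i}" E 1] assms(3) by simp
  also have "\<dots> \<le> real (card A)" using assms(1) by (simp add: card_mono)
  finally show ?thesis using assms by (simp add: sum.remove)
qed

lemma convex_combination_close:
  fixes a b A B q e t :: real
  assumes "0 \<le> t" "t \<le> 1" "\<bar>a - q * A\<bar> \<le> e * A" "\<bar>b - q * B\<bar> \<le> e * B"
  shows "\<bar>((1 - t) * a + t * b) - q * ((1 - t) * A + t * B)\<bar> \<le> e * ((1 - t) * A + t * B)"
proof -
  have "((1 - t) * a + t * b) - q * ((1 - t) * A + t * B) = (1 - t) * (a - q * A) + t * (b - q * B)"
    by (simp add: algebra_simps)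
  also have "\<bar>\<dots>\<bar> \<le> (1 - t) * \<bar>a - q * A\<bar> + t * \<bar>b - q * B\<bar>"
    using assms(1,2) by (metis abs_mult abs_of_nonneg abs_triangle_ineq diff_ge_0_iff_ge)
  also have "\<dots> \<le> (1 - t) * (e * A) + t * (e * B)"
    using assms by (intro add_mono mult_left_mono) auto
  finally show ?thesis by (simp add: algebra_simps)
qed

section \<open>Blocks and the interpolated targets\<close>

definition interp :: "(nat \<Rightarrow> nat) \<Rightarrow> (nat \<Rightarrow> nat \<Rightarrow> nat) \<Rightarrow> nat \<Rightarrow> nat \<Rightarrow> nat \<Rightarrow> real" where
  "interp N Ni i k n = real (Ni i k) + rr N Ni i (Suc k) * (real n - real (N k))"

lemma interp_Suc: "interp N Ni i k (Suc n) = interp N Ni i k n + rr N Ni i (Suc k)"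
  by (simp add: interp_def algebra_simps)

lemma interp_start: "interp N Ni i k (N k) = real (Ni i k)"
  by (simp add: interp_def)

lemma interp_end:
  assumes "N k < N (Suc k)"
  shows "interp N Ni i k (N (Suc k)) = real (Ni i (Suc k))"
  using assms by (simp add: interp_def rr_def)

text \<open>Blocks are disjoint, so \<open>blk\<close> returns the block containing \<open>n\<close> \<dots>\<close>
lemma blk_eq:
  fixes N :: "nat \<Rightarrow> nat"
  assumes mono: "strict_mono N" and n: "N k < n" "n \<le> N (Suc k)"
  shows "blk N n = Suc k"
  unfolding blk_def
proof (rule the_equality)
  fix k' assume k': "1 \<le> k' \<and> N (k' - 1) < n \<and> n \<le> N k'"
  have "N k < N k'" and "N (k' - 1) < N (Suc k)" using k' n by linarith+
  then have "k < k'" and "k' - 1 < Suc k" using strict_mono_less[OF mono] by blast+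
  then show "k' = Suc k" by linarith
qed (use n in auto)

text \<open>\<dots> and, as \<open>N\<close> is unbounded, every \<open>n \<ge> 1\<close> lies in some block.\<close>
lemma block_exists:
  fixes N :: "nat \<Rightarrow> nat"
  assumes "strict_mono N" "N 0 = 0" "n \<ge> 1"
  obtains k where "N k < n" "n \<le> N (Suc k)"
proof -
  have "n \<le> N n" using assms(1) strict_mono_imp_increasing by blast
  then obtain k where "\<forall>i\<le>k. \<not> n \<le> N i" "n \<le> N (Suc k)"
    using ex_least_nat_less[of "\<lambda>k. n \<le> N k" n] assms(2,3) by auto
  with that show ?thesis by (meson le_refl not_le)
qed

section \<open>The greedy allocation\<close>

context
  fixes I :: nat and N :: "nat \<Rightarrow> nat" and Ni :: "nat \<Rightarrow> nat \<Rightarrow> nat"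
  assumes I_pos: "I \<ge> 1" and N_0: "N 0 = 0" and N_mono: "strict_mono N"
    and Ni_0: "\<And>i. i \<in> {1..I} \<Longrightarrow> Ni i 0 = 0"
    and Ni_mono: "\<And>i k. i \<in> {1..I} \<Longrightarrow> k \<ge> 1 \<Longrightarrow> Ni i k \<ge> Ni i (k - 1)"
    and Ni_sum: "\<And>k. (\<Sum>i\<in>{1..I}. Ni i k) = N k"
begin

lemma nu_Suc_increments: "\<exists>j\<in>{1..I}. nu N Ni I (Suc n) = (nu N Ni I n)(j := nu N Ni I n j + 1)"
proof -
  obtain S R where "nu N Ni I (Suc n) = (nu N Ni I n)(pick S R I := nu N Ni I n (pick S R I) + 1)"
    by (simp add: Let_def)
  with pick_maximizes(1)[OF I_pos, of S R] show ?thesis by blast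
qed

lemma sum_nu: "(\<Sum>i\<in>{1..I}. nu N Ni I n i) = n"
proof (induction n)
  case (Suc n)
  obtain j where "j \<in> {1..I}" and step: "nu N Ni I (Suc n) = (nu N Ni I n)(j := nu N Ni I n j + 1)"
    using nu_Suc_increments by blast
  then have "(\<Sum>i\<in>{1..I}. nu N Ni I (Suc n) i) = (\<Sum>i\<in>{1..I}. nu N Ni I n i) + 1"
    unfolding step by (intro sum_increment) auto
  with Suc.IH show ?case by simp
qed simp

lemma sum_nu_real: "(\<Sum>i\<in>{1..I}. real (nu N Ni I n i)) = real n"
  by (metis of_nat_sum sum_nu)

lemma rr_nonneg: "i \<in> {1..I} \<Longrightarrow> rr N Ni i (Suc k) \<ge> 0"
  using Ni_mono[of i "Suc k"] N_mono unfolding rr_def strict_mono_def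
  by (auto intro!: divide_nonneg_pos)

lemma rr_sum: "(\<Sum>i\<in>{1..I}. rr N Ni i (Suc k)) = 1"
proof -
  have gap: "real (N (Suc k)) - real (N k) > 0" using N_mono by (simp add: strict_mono_def)
  have "(\<Sum>i\<in>{1..I}. real (Ni i (Suc k)) - real (Ni i k)) = real (N (Suc k)) - real (N k)"
    by (simp add: sum_subtractf flip: Ni_sum)
  with gap show ?thesis unfolding rr_def by (simp flip: sum_divide_distrib)
qed

lemma sum_interp: "(\<Sum>i\<in>{1..I}. interp N Ni i k n) = real n"
proof -
  have "(\<Sum>i\<in>{1..I}. interp N Ni i k n)
      = (\<Sum>i\<in>{1..I}. real (Ni i k)) + (\<Sum>i\<in>{1..I}. rr N Ni i (Suc k)) * (real n - real (N k))"
    unfolding interp_def by (simp add: sum.distrib sum_distrib_right)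
  also have "\<dots> = real n" unfolding rr_sum by (simp flip: Ni_sum)
  finally show ?thesis .
qed

text \<open>Inside a block the greedy rule increments an index of maximal deficit
  \<open>interp i k (n+1) - nu n i\<close>: the selection criterion is this deficit divided by
  the positive number of steps taken in the block.\<close>
lemma greedy_step:
  assumes "N k \<le> n" "n < N (Suc k)"
  obtains j where "j \<in> {1..I}"
    "nu N Ni I (Suc n) = (nu N Ni I n)(j := nu N Ni I n j + 1)"
    "\<And>i. i \<in> {1..I} \<Longrightarrow> interp N Ni i k (Suc n) - nu N Ni I n i
                          \<le> interp N Ni j k (Suc n) - nu N Ni I n j"
proof -
  define prev where "prev = nu N Ni I n"
  define d where "d = real (Suc n) - real (N k)"
  define S where "S = (\<lambda>i. rr N Ni i (Suc k) - (real (prev i) - real (Ni i k)) / d)"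
  define j where "j = pick S (\<lambda>i. rr N Ni i (Suc k)) I"
  have "blk N (Suc n) = Suc k" using assms N_mono by (intro blk_eq) auto
  then have step: "nu N Ni I (Suc n) = prev(j := prev j + 1)"
    by (simp add: Let_def prev_def S_def d_def j_def)
  have "d > 0" using assms by (simp add: d_def)
  then have S_deficit: "S i = (interp N Ni i k (Suc n) - prev i) / d" for i
    by (simp add: S_def interp_def d_def field_simps)
  have "S i \<le> S j" if "i \<in> {1..I}" for i
    using pick_maximizes(2)[OF I_pos that] unfolding j_def .
  with \<open>d > 0\<close> have "interp N Ni i k (Suc n) - prev i \<le> interp N Ni j k (Suc n) - prev j"
    if "i \<in> {1..I}" for i
    using that by (simp add: S_deficit divide_le_cancel)
  with that pick_maximizes(1)[OF I_pos] step show ?thesis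
    unfolding prev_def j_def by blast
qed

lemma nu_below_interp:
  assumes start: "\<forall>i\<in>{1..I}. nu N Ni I (N k) i = Ni i k"
    and n: "N k \<le> n" "n \<le> N (Suc k)"
  shows "\<forall>i\<in>{1..I}. real (nu N Ni I n i) - interp N Ni i k n < 1"
  using n(1)
proof (induction n rule: dec_induct)
  case base
  then show ?case using start by (simp add: interp_start)
next
  case (step m)
  have "m < N (Suc k)" using step.hyps(2) n(2) by simp
  obtain j where j: "j \<in> {1..I}"
    and nu_Suc: "nu N Ni I (Suc m) = (nu N Ni I m)(j := nu N Ni I m j + 1)"
    and j_max: "\<And>i. i \<in> {1..I} \<Longrightarrow> interp N Ni i k (Suc m) - nu N Ni I m i
                                     \<le> interp N Ni j k (Suc m) - nu N Ni I m j"
    using greedy_step[OF step.hyps(1) \<open>m < N (Suc k)\<close>] by blast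
  have "(\<Sum>i\<in>{1..I}. interp N Ni i k (Suc m) - nu N Ni I m i) = 1"
    unfolding sum_subtractf sum_interp sum_nu_real by simp
  then have deficit_pos: "interp N Ni j k (Suc m) - nu N Ni I m j > 0"
    using max_term_pos[of "{1..I}" "\<lambda>i. interp N Ni i k (Suc m) - nu N Ni I m i" j] j_max
    by simp
  show ?case
  proof
    fix i assume i: "i \<in> {1..I}"
    show "real (nu N Ni I (Suc m) i) - interp N Ni i k (Suc m) < 1"
    proof (cases "i = j")
      case True
      then show ?thesis unfolding nu_Suc using deficit_pos by simp
    next
      case False
      then have "nu N Ni I (Suc m) i = nu N Ni I m i" unfolding nu_Suc by simp
      moreover have "real (nu N Ni I m i) - interp N Ni i k m < 1" using step.IH i by blast
      ultimately show ?thesis using rr_nonneg[OF i, of k] interp_Suc[of N Ni i k m] by simp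
    qed
  qed
qed

lemma nu_at_block_end: "\<forall>i\<in>{1..I}. nu N Ni I (N k) i = Ni i k"
proof (induction k)
  case 0
  then show ?case using N_0 Ni_0 by simp
next
  case (Suc k)
  have gap: "N k < N (Suc k)" using N_mono by (simp add: strict_mono_def)
  have le: "nu N Ni I (N (Suc k)) i \<le> Ni i (Suc k)" if "i \<in> {1..I}" for i
  proof -
    have "real (nu N Ni I (N (Suc k)) i) - real (Ni i (Suc k)) < 1"
      using nu_below_interp[OF Suc.IH, of "N (Suc k)"] gap that by (simp add: interp_end)
    then show ?thesis by linarith
  qed
  have "(\<Sum>i\<in>{1..I}. nu N Ni I (N (Suc k)) i) = (\<Sum>i\<in>{1..I}. Ni i (Suc k))"
    by (simp only: sum_nu Ni_sum)
  then show ?case using le sum_mono_inv[of "\<lambda>i. nu N Ni I (N (Suc k)) i"] by blast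
qed

lemma nu_near_interp:
  assumes "N k \<le> n" "n \<le> N (Suc k)" "i \<in> {1..I}"
  shows "\<bar>real (nu N Ni I n i) - interp N Ni i k n\<bar> \<le> real I"
proof -
  define E where "E = (\<lambda>i. real (nu N Ni I n i) - interp N Ni i k n)"
  have below: "\<And>j. j \<in> {1..I} \<Longrightarrow> E j < 1"
    using nu_below_interp[OF nu_at_block_end assms(1,2)] unfolding E_def by blast
  have "(\<Sum>j\<in>{1..I}. E j) = 0"
    unfolding E_def sum_subtractf sum_interp sum_nu_real by simp
  then have "E i \<ge> - real I"
    using zero_sum_lower_bound[of "{1..I}" E i] below assms(3) by (simp add: less_imp_le)
  with below[OF assms(3)] I_pos show ?thesis unfolding E_def by simp
qed

lemma interp_close:
  assumes n: "N k \<le> n" "n \<le> N (Suc k)"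
    and close_k: "\<bar>real (Ni i k) - q * real (N k)\<bar> \<le> e * real (N k)"
    and close_Suc_k: "\<bar>real (Ni i (Suc k)) - q * real (N (Suc k))\<bar> \<le> e * real (N (Suc k))"
  shows "\<bar>interp N Ni i k n - q * real n\<bar> \<le> e * real n"
proof -
  define t where "t = (real n - real (N k)) / (real (N (Suc k)) - real (N k))"
  have gap: "real (N (Suc k)) - real (N k) > 0" using N_mono by (simp add: strict_mono_def)
  have t: "0 \<le> t" "t \<le> 1" using n gap by (auto simp: t_def divide_le_eq)
  have "(1 - t) * real (N k) + t * real (N (Suc k)) = real (N k) + t * (real (N (Suc k)) - real (N k))"
    by (simp add: algebra_simps)
  also have "\<dots> = real n" using gap by (simp add: t_def)
  finally have "real n = (1 - t) * real (N k) + t * real (N (Suc k))" by simp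
  moreover have "rr N Ni i (Suc k) * (real n - real (N k)) = t * (real (Ni i (Suc k)) - real (Ni i k))"
    using gap unfolding rr_def t_def by (simp add: field_simps)
  then have "interp N Ni i k n = (1 - t) * real (Ni i k) + t * real (Ni i (Suc k))"
    by (simp add: interp_def algebra_simps)
  ultimately show ?thesis
    using convex_combination_close[OF t close_k close_Suc_k] by simp
qed

lemma nu_close:
  assumes "N k \<le> n" "n \<le> N (Suc k)" "i \<in> {1..I}"
    and "\<bar>real (Ni i k) - q * real (N k)\<bar> \<le> e * real (N k)"
    and "\<bar>real (Ni i (Suc k)) - q * real (N (Suc k))\<bar> \<le> e * real (N (Suc k))"
  shows "\<bar>real (nu N Ni I n i) - q * real n\<bar> \<le> real I + e * real n"
proof -
  have "\<bar>real (nu N Ni I n i) - q * real n\<bar>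
      \<le> \<bar>real (nu N Ni I n i) - interp N Ni i k n\<bar> + \<bar>interp N Ni i k n - q * real n\<bar>"
    by linarith
  also have "\<dots> \<le> real I + e * real n"
    using nu_near_interp[OF assms(1-3)] interp_close[OF assms(1,2,4,5)] by (rule add_mono)
  finally show ?thesis .
qed

text \<open>Convergence of the target ratios, restated without division: eventually
  \<open>|Ni i k - q N k| \<le> e N k\<close>.  (At \<open>k = 0\<close> both sides vanish.)\<close>
lemma target_close_eventually:
  assumes i: "i \<in> {1..I}" and lim: "(\<lambda>k. real (Ni i k) / real (N k)) \<longlonglongrightarrow> q" and "e > 0"
  obtains K where "\<And>k. k \<ge> K \<Longrightarrow> \<bar>real (Ni i k) - q * real (N k)\<bar> \<le> e * real (N k)"
proof -
  obtain K where K: "\<And>k. k \<ge> K \<Longrightarrow> \<bar>real (Ni i k) / real (N k) - q\<bar> < e"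
    using LIMSEQ_D[OF lim \<open>e > 0\<close>] by auto
  have "\<bar>real (Ni i k) - q * real (N k)\<bar> \<le> e * real (N k)" if "k \<ge> K" for k
  proof (cases "N k = 0")
    case True
    then have "k = 0" using strict_mono_eq[OF N_mono, of k 0] N_0 by simp
    with True i Ni_0 show ?thesis by simp
  next
    case False
    then have "real (Ni i k) - q * real (N k) = real (N k) * (real (Ni i k) / real (N k) - q)"
      by (simp add: field_simps)
    then have "\<bar>real (Ni i k) - q * real (N k)\<bar> = real (N k) * \<bar>real (Ni i k) / real (N k) - q\<bar>"
      by (simp add: abs_mult)
    also have "\<dots> \<le> real (N k) * e" using K[OF that] by (intro mult_left_mono) auto
    finally show ?thesis by (simp add: mult.commute)
  qed
  with that show ?thesis by blast
qed

text \<open>The main convergence statement for a single index: for \<open>n\<close> beyond the block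
  boundary \<open>N K\<close> and beyond \<open>I / e\<close>, the error \<open>|nu n i / n - q|\<close> is below \<open>2 e\<close>.\<close>
lemma nu_ratio_tendsto:
  assumes i: "i \<in> {1..I}" and lim: "(\<lambda>k. real (Ni i k) / real (N k)) \<longlonglongrightarrow> q"
  shows "(\<lambda>n. real (nu N Ni I n i) / real n) \<longlonglongrightarrow> q"
proof (rule LIMSEQ_I)
  fix r :: real assume "r > 0"
  define e where "e = r / 2"
  have "e > 0" using \<open>r > 0\<close> by (simp add: e_def)
  obtain K where close: "\<And>k. k \<ge> K \<Longrightarrow> \<bar>real (Ni i k) - q * real (N k)\<bar> \<le> e * real (N k)"
    using target_close_eventually[OF i lim \<open>e > 0\<close>] by blast
  obtain m :: nat where "real I / e < real m" using reals_Archimedean2 by blast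
  define n0 where "n0 = max (Suc (N K)) m"
  have "real m \<le> real n0" by (simp add: n0_def)
  then have n0: "n0 > N K" "real n0 > real I / e"
    using \<open>real I / e < real m\<close> by (simp_all add: n0_def)
  show "\<exists>no. \<forall>n\<ge>no. norm (real (nu N Ni I n i) / real n - q) < r"
  proof (intro exI allI impI)
    fix n assume "n \<ge> n0"
    then have "n \<ge> 1" using n0(1) by linarith
    then obtain k where k: "N k < n" "n \<le> N (Suc k)"
      using block_exists[OF N_mono N_0] by blast
    have "N K < N (Suc k)" using k \<open>n \<ge> n0\<close> n0(1) by linarith
    then have "k \<ge> K" "Suc k \<ge> K" using strict_mono_less[OF N_mono] by simp_all
    have "\<bar>real (nu N Ni I n i) - q * real n\<bar> \<le> real I + e * real n"
      by (rule nu_close[OF less_imp_le[OF k(1)] k(2) i close[OF \<open>k \<ge> K\<close>] close[OF \<open>Suc k \<ge> K\<close>]])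
    also have "\<dots> < r * real n"
    proof -
      have "real I < e * real n0" using n0(2) \<open>e > 0\<close> by (simp add: field_simps)
      also have "\<dots> \<le> e * real n" using \<open>n \<ge> n0\<close> \<open>e > 0\<close> by simp
      finally show ?thesis by (simp add: e_def)
    qed
    finally have "\<bar>real (nu N Ni I n i) - q * real n\<bar> < r * real n" .
    moreover have "real n > 0" using k by simp
    moreover have "real (nu N Ni I n i) / real n - q = (real (nu N Ni I n i) - q * real n) / real n"
      using \<open>real n > 0\<close> by (simp add: field_simps)
    ultimately show "norm (real (nu N Ni I n i) / real n - q) < r"
      by (simp add: pos_divide_less_eq)
  qed
qed

end

theorem lemma2p6:
  fixes I :: nat and N :: "nat \<Rightarrow> nat" and Ni :: "nat \<Rightarrow> nat \<Rightarrow> nat" and q :: "nat \<Rightarrow> real"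
  assumes "I \<ge> 1"
    and "N 0 = 0" and "strict_mono N"
    and "\<And>i. i \<in> {1..I} \<Longrightarrow> Ni i 0 = 0"
    and "\<And>i k. i \<in> {1..I} \<Longrightarrow> k \<ge> 1 \<Longrightarrow> Ni i k \<ge> Ni i (k - 1)"
    and "\<And>k. (\<Sum>i\<in>{1..I}. Ni i k) = N k"
    and "\<And>i. i \<in> {1..I} \<Longrightarrow> (\<lambda>k. real (Ni i k) / real (N k)) \<longlonglongrightarrow> q i"
  shows "\<forall>i\<in>{1..I}. (\<lambda>n. real (nu N Ni I n i) / real n) \<longlonglongrightarrow> q i"
proof
  fix i assume i: "i \<in> {1..I}"
  show "(\<lambda>n. real (nu N Ni I n i) / real n) \<longlonglongrightarrow> q i"
    by (rule nu_ratio_tendsto[OF assms(1-6) i assms(7)[OF i]])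
qed

end
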